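(* Let $q$ be a prime power, $n \le m$, and let $\mathcal G(n,k)$ be a Gabidulin code of length $n$ and dimension $k$ over $\mathbb F_{q^m}$ with minimum rank distance $d = n-k+1$. Let $\tau < d$ and $\mathbf r \in \mathbb F_{q^m}^n$. Let $\mathbf c_1, \dots, \mathbf c_\ell$ be distinct codewords of $\mathcal G(n,k)$ with $\mathrm{rank}(\mathbf r - \mathbf c_i) \le \tau$ for all $i = 1,\dots,\ell$. Let $i \ne j$, $t_i = \mathrm{rank}(\mathbf r - \mathbf c_i)$, $t_j = \mathrm{rank}(\mathbf r - \mathbf c_j)$, with $\lfloor (d-1)/2 \rfloor < t_i, t_j \le \tau$. Then the row spaces $\mathcal R(\mathbf r - \mathbf c_i)$ and $\mathcal R(\mathbf r - \mathbf c_j)$ have no common subspace of dimension at least $t_i + t_j - d + 1$.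
   Context: A linearized polynomial over $\mathbb F_{q^m}$ is $f(x) = \sum_{i} f_i x^{q^i}$ with $f_i \in \mathbb F_{q^m}$; its $q$-degree is the largest $i$ with $f_i \neq 0$. The Gabidulin code $\mathcal G(n,k)$ is $\{(f(\alpha_0), \dots, f(\alpha_{n-1})) : \deg_q f < k\}$ for fixed $\alpha_0,\dots,\alpha_{n-1} \in \mathbb F_{q^m}$ linearly independent over $\mathbb F_q$. Fixing a basis of $\mathbb F_{q^m}$ over $\mathbb F_q$, each $\mathbf x \in \mathbb F_{q^m}^n$ corresponds to a matrix $\mathbf X \in \mathbb F_q^{m\times n}$; $\mathrm{rank}(\mathbf x)$ is the $\mathbb F_q$-rank of $\mathbf X$ and $\mathcal R(\mathbf x)$ is the row space of $\mathbf X$ over $\mathbb F_q$ (a subspace of $\mathbb F_q^n$). The minimum rank distance $d = \min\{\mathrm{rank}(\mathbf c) : \mathbf c \in \mathcal G(n,k), \mathbf c \ne 0\}$ equals $n-k+1$. *)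

theory Defs
  imports "HOL-Analysis.Analysis"
begin

text \<open>Setting: the small field F_q is a finite field type 'f (so q = CARD('f) is a
prime power), the large field F_{q^m} is a finite field type 'a, and emb embeds
F_q into F_{q^m}.  Vectors of length n are elements of 'a^'n with CARD('n) = n.\<close>

definition field_embedding :: "('f::field \<Rightarrow> 'a::field) \<Rightarrow> bool" where
  "field_embedding emb \<longleftrightarrow> emb 0 = 0 \<and> emb 1 = 1 \<and>
     (\<forall>x y. emb (x + y) = emb x + emb y) \<and> (\<forall>x y. emb (x * y) = emb x * emb y)"

definition ext_scale :: "('f::field \<Rightarrow> 'a::field) \<Rightarrow> 'f \<Rightarrow> 'a \<Rightarrow> 'a" where
  "ext_scale emb c x = emb c * x"

definition lin_poly_eval :: "nat \<Rightarrow> nat \<Rightarrow> (nat \<Rightarrow> 'a::field) \<Rightarrow> 'a \<Rightarrow> 'a" where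
  "lin_poly_eval q k f x = (\<Sum>i<k. f i * x ^ (q ^ i))"

definition gabidulin :: "nat \<Rightarrow> nat \<Rightarrow> 'a::field ^ 'n \<Rightarrow> ('a ^ 'n) set" where
  "gabidulin q k \<alpha> = {(\<chi> j. lin_poly_eval q k f (\<alpha> $ j)) | f. True}"

definition lin_indep_over :: "('f::field \<Rightarrow> 'a::field) \<Rightarrow> 'a ^ 'n::finite \<Rightarrow> bool" where
  "lin_indep_over emb \<alpha> \<longleftrightarrow>
     (\<forall>c :: 'n \<Rightarrow> 'f. (\<Sum>j\<in>UNIV. emb (c j) * \<alpha> $ j) = 0 \<longrightarrow> (\<forall>j. c j = 0))"

text \<open>Rank of x: the F_q-rank of its matrix expansion = dimension over F_q of the
span of its entries (the column space).\<close>
definition rank_weight :: "('f::field \<Rightarrow> 'a::field) \<Rightarrow> 'a ^ 'n \<Rightarrow> nat" where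
  "rank_weight emb x = vector_space.dim (ext_scale emb) (range (\<lambda>j. x $ j))"

text \<open>Row space R(x) in F_q^n of the matrix X: the span of the rows
(\<beta>_i(x_0),...,\<beta>_i(x_{n-1})), where \<beta>_i are coordinate functionals w.r.t. a basis;
this span equals the set of all (\<phi>(x_0),...,\<phi>(x_{n-1})) for F_q-linear \<phi> : F_{q^m} \<rightarrow> F_q,
which is basis independent.\<close>
definition row_space :: "('f::field \<Rightarrow> 'a::field) \<Rightarrow> 'a ^ 'n \<Rightarrow> ('f ^ 'n) set" where
  "row_space emb x = {(\<chi> j. \<phi> (x $ j)) | \<phi>. Vector_Spaces.linear (ext_scale emb) (*) \<phi>}"

end

theory Submission
  imports Defs "HOL-Algebra.Sylow" "HOL-Algebra.Multiplicative_Group"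
    "HOL-Computational_Algebra.Polynomial"
begin

text \<open>
  The difference of two distinct codewords is a nonzero codeword, so it has rank at least
  d = n - k + 1.  Every linear functional applied to c_i - c_j = (r - c_j) - (r - c_i) is the
  difference of its values on r - c_j and r - c_i, so the row space of c_i - c_j lies in
  R_i + R_j.  As the dimension of a row space is the rank, dim (R_i + R_j) >= d, and the
  Grassmann formula gives dim (R_i \<inter> R_j) <= t_i + t_j - d.

  The minimum distance is a counting argument: a nonzero linearized polynomial L of
  q-degree < k is F_q-linear with at most q^(k-1) roots, and it maps the q^n-element F_q-span
  of the evaluation points into the F_q-span of the entries of the codeword, which has at most
  q^rank elements; hence q^n <= q^rank * q^(k-1).
\<close>

lemma eq_power_if_unique_prime_divisor:
  fixes n p :: nat
  assumes "n > 0" and "\<And>r. prime r \<Longrightarrow> r dvd n \<Longrightarrow> r = p"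
  shows "\<exists>e. n = p ^ e"
proof -
  have "prime_factors n \<subseteq> {p}"
    using assms by (auto simp: prime_factors_dvd)
  moreover have n: "n = (\<Prod>r\<in>prime_factors n. r ^ multiplicity r n)"
    using prod_prime_factors[of n] assms(1) by simp
  ultimately consider "prime_factors n = {}" | "prime_factors n = {p}"
    by (auto simp: subset_singleton_iff)
  thus ?thesis
  proof cases
    case 1
    thus ?thesis using n by (intro exI[of _ 0]) simp
  next
    case 2
    thus ?thesis using n by (intro exI[of _ "multiplicity p n"]) simp
  qed
qed

lemma prime_CHAR_finite: "prime CHAR('f::{finite,field})"
  by (rule prime_CHAR_semidom[OF finite_imp_CHAR_pos]) simp

lemma prime_dvd_CARD_imp_eq_CHAR:
  assumes r: "prime r" "r dvd CARD('f::{finite,field})"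
  shows "r = CHAR('f)"
proof -
  define G where "G = \<lparr>carrier = (UNIV :: 'f set), monoid.mult = (+), one = (0 :: 'f)\<rparr>"
  have G: "group G"
  proof (rule groupI)
    fix x assume "x \<in> carrier G"
    show "\<exists>y\<in>carrier G. y \<otimes>\<^bsub>G\<^esub> x = \<one>\<^bsub>G\<^esub>"
      by (intro bexI[of _ "-x"]) (auto simp: G_def)
  qed (auto simp: G_def add_ac)
  txt \<open>Cauchy's theorem for the additive group, as the case p^1 of Sylow's theorem.\<close>
  obtain m where "CARD('f) = r * m" using r(2) by blast
  hence "order G = r ^ 1 * m" by (simp add: order_def G_def)
  then obtain H where H: "subgroup H G" "card H = r"
    using sylow_thm[OF r(1) G, of 1 m] by (auto simp: G_def)
  interpret H: group "G\<lparr>carrier := H\<rparr>"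
    using H(1) G by (simp add: group.subgroup_imp_group)
  obtain x where x: "x \<in> H" "x \<noteq> 0"
  proof -
    have "\<not> H \<subseteq> {0}"
      using H(2) prime_gt_1_nat[OF r(1)] card_mono[of "{0::'f}" H] by auto
    thus thesis using that by blast
  qed
  have pow: "x [^]\<^bsub>G\<lparr>carrier := H\<rparr>\<^esub> n = of_nat n * x" for n :: nat
    by (induction n) (auto simp: G_def algebra_simps)
  have "order (G\<lparr>carrier := H\<rparr>) = r"
    using H(2) by (simp add: order_def)
  hence "of_nat r * x = 0"
    using H.pow_order_eq_1[of x] x(1) unfolding pow by (simp add: G_def)
  hence "CHAR('f) dvd r"
    using x(2) by (simp add: of_nat_eq_0_iff_char_dvd)
  thus ?thesis
    using r(1) prime_CHAR_finite by (metis primes_dvd_imp_eq)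
qed

lemma CARD_eq_CHAR_power: "\<exists>e. CARD('f::{finite,field}) = CHAR('f) ^ e"
  by (rule eq_power_if_unique_prime_divisor) (auto intro: prime_dvd_CARD_imp_eq_CHAR)

lemma card_field_ge_2: "CARD('f::{finite,field}) \<ge> 2"
  using card_mono[of "UNIV :: 'f set" "{0, 1}"] by simp

lemma power_CARD_eq_self: "x ^ CARD('f) = (x :: 'f::{finite,field})"
proof (cases "x = 0")
  case False
  define G where "G = \<lparr>carrier = (UNIV - {0} :: 'f set), monoid.mult = (*), one = (1 :: 'f)\<rparr>"
  have G: "group G"
  proof (rule groupI)
    fix y assume "y \<in> carrier G"
    thus "\<exists>z\<in>carrier G. z \<otimes>\<^bsub>G\<^esub> y = \<one>\<^bsub>G\<^esub>"
      by (intro bexI[of _ "inverse y"]) (auto simp: G_def)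
  qed (auto simp: G_def mult_ac)
  have pow: "x [^]\<^bsub>G\<^esub> n = x ^ n" for n :: nat
    by (induction n) (auto simp: G_def mult_ac)
  have "order G = CARD('f) - 1"
    by (simp add: order_def G_def card_Diff_singleton)
  hence "x ^ (CARD('f) - 1) = 1"
    using group.pow_order_eq_1[OF G, of x] False unfolding pow by (simp add: G_def)
  moreover have "CARD('f) = Suc (CARD('f) - 1)"
    using finite_UNIV_card_ge_0[where ?'a = 'f] by simp
  ultimately show ?thesis
    by (metis power_Suc mult_1_right)
qed simp

lemma power_CARD_power_eq_self: "x ^ (CARD('f) ^ s) = (x :: 'f::{finite,field})"
  by (induction s) (simp_all add: power_mult power_CARD_eq_self flip: power_Suc2)

lemma card_le_card_image_mult_card_kernel:
  fixes f :: "'a::{finite,ab_group_add} \<Rightarrow> 'b::ab_group_add"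
  assumes f_diff: "\<And>x y. f (x - y) = f x - f y"
  shows "card A \<le> card (f ` A) * card {x. f x = 0}"
proof -
  have fiber: "card {y. f y = f x} \<le> card {x. f x = 0}" for x
  proof -
    have "y \<in> (\<lambda>u. x + u) ` {x. f x = 0}" if "f y = f x" for y
      using that by (intro image_eqI[of _ _ "y - x"]) (auto simp: f_diff)
    hence "{y. f y = f x} \<subseteq> (\<lambda>u. x + u) ` {x. f x = 0}"
      by blast
    hence "card {y. f y = f x} \<le> card ((\<lambda>u. x + u) ` {x. f x = 0})"
      by (intro card_mono) auto
    also have "\<dots> \<le> card {x. f x = 0}"
      by (rule card_image_le) simp
    finally show ?thesis .
  qed
  have "A \<subseteq> (\<Union>z\<in>f ` A. {y. f y = z})" by auto
  hence "card A \<le> card (\<Union>z\<in>f ` A. {y. f y = z})"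
    by (intro card_mono) auto
  also have "\<dots> \<le> (\<Sum>z\<in>f ` A. card {y. f y = z})"
    by (rule card_UN_le) simp
  also have "\<dots> \<le> card (f ` A) * card {x. f x = 0}"
    using sum_bounded_above[of "f ` A" "\<lambda>z. card {y. f y = z}"] fiber by auto
  finally show ?thesis .
qed

lemma card_span_le:
  fixes scale :: "'f::{finite,field} \<Rightarrow> 'b::{finite,ab_group_add} \<Rightarrow> 'b"
  assumes "vector_space scale"
  shows "card (module.span scale S) \<le> CARD('f) ^ vector_space.dim scale S"
proof -
  interpret vector_space scale by fact
  obtain B where B: "B \<subseteq> S" "independent B" "S \<subseteq> span B" "card B = dim S"
    using basis_exists by blast
  define g where "g u = (\<Sum>v\<in>B. scale (u v) v)" for u :: "'b \<Rightarrow> 'f"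
  have "span S = span B"
    using B(1,3) by (intro span_subspace span_mono) auto
  also have "\<dots> = range g"
    unfolding g_def by (rule span_finite) simp
  also have "\<dots> \<subseteq> g ` (B \<rightarrow>\<^sub>E UNIV)"
  proof
    fix y assume "y \<in> range g"
    then obtain u where "y = g u" by blast
    moreover have "g u = g (restrict u B)"
      unfolding g_def by (intro sum.cong) auto
    ultimately show "y \<in> g ` (B \<rightarrow>\<^sub>E UNIV)" by auto
  qed
  finally have "card (span S) \<le> card (B \<rightarrow>\<^sub>E (UNIV :: 'f set))"
    by (meson card_image_le card_mono finite order_trans)
  thus ?thesis by (simp add: card_PiE B(4))
qed

lemma card_lin_poly_eval_roots_le:
  fixes f :: "nat \<Rightarrow> 'a::field"
  assumes q: "q \<ge> 2" and s0: "s0 < k" "f s0 \<noteq> 0"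
  shows "card {x. lin_poly_eval q k f x = 0} \<le> q ^ (k - 1)"
proof -
  define P where "P = (\<Sum>s<k. Polynomial.monom (f s) (q ^ s))"
  have eval: "poly P x = lin_poly_eval q k f x" for x
    by (simp add: P_def poly_sum poly_monom lin_poly_eval_def)
  have "Polynomial.coeff P (q ^ s0) = (\<Sum>s<k. if s = s0 then f s else 0)"
    using q by (simp add: P_def coeff_sum power_inject_exp)
  hence "P \<noteq> 0" using s0 by auto
  have "degree P \<le> q ^ (k - 1)"
    unfolding P_def
  proof (rule degree_sum_le)
    fix s assume "s \<in> {..<k}"
    hence "q ^ s \<le> q ^ (k - 1)" using q by (intro power_increasing) auto
    thus "degree (Polynomial.monom (f s) (q ^ s)) \<le> q ^ (k - 1)"
      using degree_monom_le order_trans by blast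
  qed simp
  thus ?thesis
    using card_poly_roots_bound[OF \<open>P \<noteq> 0\<close>] by (simp add: eval)
qed

lemma gabidulin_diff:
  assumes "x \<in> gabidulin q k \<alpha>" "y \<in> gabidulin q k \<alpha>"
  shows "x - y \<in> gabidulin q k \<alpha>"
proof -
  obtain f g where "x = (\<chi> j. lin_poly_eval q k f (\<alpha> $ j))"
    and "y = (\<chi> j. lin_poly_eval q k g (\<alpha> $ j))"
    using assms by (auto simp: gabidulin_def)
  hence "x - y = (\<chi> j. lin_poly_eval q k (\<lambda>s. f s - g s) (\<alpha> $ j))"
    by (simp add: vec_eq_iff lin_poly_eval_def sum_subtractf left_diff_distrib)
  thus ?thesis by (auto simp: gabidulin_def)
qed

text \<open>Row b of the matrix of x with respect to an F_q-basis B of the span of its entries.\<close>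

definition coordinate_row ::
    "('f::field \<Rightarrow> 'a::field) \<Rightarrow> 'a set \<Rightarrow> 'a ^ 'n \<Rightarrow> 'a \<Rightarrow> 'f ^ 'n" where
  "coordinate_row emb B x b = (\<chi> j. module.representation (ext_scale emb) B (x $ j) b)"

context
  fixes emb :: "'f::{finite,field} \<Rightarrow> 'a::{finite,field}"
  assumes emb: "field_embedding emb"
begin

lemma emb_0[simp]: "emb 0 = 0" and emb_1[simp]: "emb 1 = 1"
  and emb_add[simp]: "emb (x + y) = emb x + emb y"
  and emb_mult[simp]: "emb (x * y) = emb x * emb y"
  using emb by (auto simp: field_embedding_def)

lemma emb_diff[simp]: "emb (x - y) = emb x - emb y"
proof -
  have "emb (x - y) + emb y = emb x"
    by (metis emb_add diff_add_cancel)
  thus ?thesis by (simp add: eq_diff_eq)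
qed

lemma emb_of_nat[simp]: "emb (of_nat n) = of_nat n"
  by (induction n) auto

lemma emb_power[simp]: "emb (x ^ n) = emb x ^ n"
  by (induction n) auto

lemma emb_eq_0_iff[simp]: "emb x = 0 \<longleftrightarrow> x = 0"
  by (metis emb_0 emb_1 emb_mult mult_zero_left right_inverse zero_neq_one)

lemma CHAR_eq_CHAR_of_embedding: "CHAR('a) = CHAR('f)"
proof -
  have "of_nat n = (0::'a) \<longleftrightarrow> of_nat n = (0::'f)" for n
    by (metis emb_eq_0_iff emb_of_nat)
  hence "CHAR('f) dvd CHAR('a)" "CHAR('a) dvd CHAR('f)"
    by (metis of_nat_CHAR of_nat_eq_0_iff_char_dvd)+
  thus ?thesis by (rule dvd_antisym[rotated])
qed

lemma power_CARD_power_add: "(x + y :: 'a) ^ (CARD('f) ^ s) = x ^ (CARD('f) ^ s) + y ^ (CARD('f) ^ s)"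
proof -
  obtain e where "CARD('f) = CHAR('f) ^ e" using CARD_eq_CHAR_power by blast
  hence "CARD('f) ^ s = CHAR('a) ^ (e * s)"
    by (simp add: CHAR_eq_CHAR_of_embedding power_mult)
  thus ?thesis
    using freshmans_dream'[OF prime_CHAR_finite] by metis
qed

lemma vector_space_ext_scale: "vector_space (ext_scale emb)"
  by unfold_locales (auto simp: ext_scale_def algebra_simps)

interpretation ext: vector_space "ext_scale emb"
  by (rule vector_space_ext_scale)

interpretation functionals: vector_space_pair "ext_scale emb" "(*) :: 'f \<Rightarrow> 'f \<Rightarrow> 'f"
  by (intro vector_space_pair.intro vector_space_ext_scale vector_space_over_itself.vector_space_axioms)

lemma linear_lin_poly_eval:
  "Vector_Spaces.linear (ext_scale emb) (ext_scale emb) (lin_poly_eval CARD('f) k f)"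
  unfolding Vector_Spaces.linear_iff
  by (simp add: vector_space_ext_scale lin_poly_eval_def ext_scale_def power_CARD_power_add
      power_mult_distrib power_CARD_power_eq_self sum.distrib sum_distrib_left
      distrib_left mult_ac flip: emb_power)

lemma gabidulin_rank_weight_ge:
  fixes \<alpha> e :: "'a ^ 'n"
  assumes alpha: "lin_indep_over emb \<alpha>" and e: "e \<in> gabidulin CARD('f) k \<alpha>"
    and "e \<noteq> 0" and "k \<le> CARD('n)"
  shows "CARD('n) - k + 1 \<le> rank_weight emb e"
proof -
  define q where "q = CARD('f)"
  have q: "q \<ge> 2" unfolding q_def by (rule card_field_ge_2)
  obtain h where e_eq: "e = (\<chi> j. lin_poly_eval q k h (\<alpha> $ j))"
    using e by (auto simp: gabidulin_def q_def)
  define L where "L = lin_poly_eval q k h"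
  interpret L: Vector_Spaces.linear "ext_scale emb" "ext_scale emb" L
    unfolding L_def q_def by (rule linear_lin_poly_eval)
  obtain s0 where s0: "s0 < k" "h s0 \<noteq> 0"
  proof -
    have "\<exists>s0<k. h s0 \<noteq> 0"
      using \<open>e \<noteq> 0\<close> by (auto simp: e_eq vec_eq_iff lin_poly_eval_def intro: ccontr)
    thus thesis using that by blast
  qed
  define A where "A v = (\<Sum>j\<in>UNIV. ext_scale emb (v $ j) (\<alpha> $ j))" for v :: "'f ^ 'n"
  have "inj A"
  proof (rule injI)
    fix v w assume "A v = A w"
    hence "(\<Sum>j\<in>UNIV. emb ((v - w) $ j) * \<alpha> $ j) = 0"
      by (simp add: A_def ext_scale_def algebra_simps sum_subtractf)
    thus "v = w"
      using alpha[unfolded lin_indep_over_def, rule_format, of "\<lambda>j. (v - w) $ j"]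
      by (simp add: vec_eq_iff)
  qed
  hence "q ^ CARD('n) = card (range A)"
    by (simp add: card_image q_def)
  also have "\<dots> \<le> card (L ` range A) * card {x. L x = 0}"
    by (rule card_le_card_image_mult_card_kernel) (rule L.diff)
  also have "\<dots> \<le> q ^ rank_weight emb e * q ^ (k - 1)"
  proof (rule mult_mono)
    have "L (A v) = (\<Sum>j\<in>UNIV. ext_scale emb (v $ j) (e $ j))" for v
      unfolding A_def L.sum L.scale by (simp add: e_eq L_def)
    also have "\<dots> v \<in> ext.span (range (($) e))" for v
      by (intro ext.span_sum ext.span_scale ext.span_base) auto
    finally have "L ` range A \<subseteq> ext.span (range (($) e))"
      by auto
    hence "card (L ` range A) \<le> card (ext.span (range (($) e)))"
      by (intro card_mono) auto
    also have "\<dots> \<le> q ^ rank_weight emb e"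
      unfolding rank_weight_def q_def by (rule card_span_le[OF vector_space_ext_scale])
    finally show "card (L ` range A) \<le> q ^ rank_weight emb e" .
    show "card {x. L x = 0} \<le> q ^ (k - 1)"
      unfolding L_def by (rule card_lin_poly_eval_roots_le[of q s0 k h, OF q s0])
  qed simp_all
  finally have "q ^ CARD('n) \<le> q ^ (rank_weight emb e + (k - 1))"
    by (simp only: power_add)
  hence "CARD('n) \<le> rank_weight emb e + (k - 1)"
    using q by (simp add: power_le_imp_le_exp)
  thus ?thesis using s0(1) \<open>k \<le> CARD('n)\<close> by linarith
qed

lemma functional_in_row_space:
  "Vector_Spaces.linear (ext_scale emb) (*) \<phi> \<Longrightarrow> (\<chi> j. \<phi> (x $ j)) \<in> row_space emb x"
  by (auto simp: row_space_def)

lemma row_space_subspace: "vec.subspace (row_space emb x)"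
  unfolding vec.subspace_def
proof (intro conjI ballI allI)
  show "0 \<in> row_space emb x"
    using functional_in_row_space[OF functionals.linear_zero] by (simp add: zero_vec_def)
  fix u v assume "u \<in> row_space emb x"
  then obtain \<phi> where u: "u = (\<chi> j. \<phi> (x $ j))"
      and \<phi>: "Vector_Spaces.linear (ext_scale emb) (*) \<phi>"
    by (auto simp: row_space_def)
  have "c *s u = (\<chi> j. c * \<phi> (x $ j))" for c
    by (simp add: u vec_eq_iff)
  thus "c *s u \<in> row_space emb x" for c
    using functional_in_row_space[OF functionals.linear_compose_scale_right[OF \<phi>, of c]] by simp
  assume "v \<in> row_space emb x"
  then obtain \<psi> where v: "v = (\<chi> j. \<psi> (x $ j))"
      and \<psi>: "Vector_Spaces.linear (ext_scale emb) (*) \<psi>"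
    by (auto simp: row_space_def)
  have "u + v = (\<chi> j. \<phi> (x $ j) + \<psi> (x $ j))"
    by (simp add: u v vec_eq_iff)
  thus "u + v \<in> row_space emb x"
    using functional_in_row_space[OF functionals.linear_compose_add[OF \<phi> \<psi>]] by simp
qed

lemma row_space_diff_subset:
  "row_space emb (x - y) \<subseteq> {a + b | a b. a \<in> row_space emb x \<and> b \<in> row_space emb y}"
proof
  fix u assume "u \<in> row_space emb (x - y)"
  then obtain \<phi> where u: "u = (\<chi> j. \<phi> ((x - y) $ j))"
      and \<phi>: "Vector_Spaces.linear (ext_scale emb) (*) \<phi>"
    by (auto simp: row_space_def)
  have "u = (\<chi> j. \<phi> (x $ j)) + (\<chi> j. - \<phi> (y $ j))"
    using \<phi> by (simp add: u vec_eq_iff functionals.linear_diff)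
  moreover have "(\<chi> j. \<phi> (x $ j)) \<in> row_space emb x"
    and "(\<chi> j. - \<phi> (y $ j)) \<in> row_space emb y"
    using functional_in_row_space[OF \<phi>]
      functional_in_row_space[OF functionals.linear_compose_neg[OF \<phi>]]
    by auto
  ultimately show "u \<in> {a + b | a b. a \<in> row_space emb x \<and> b \<in> row_space emb y}"
    by blast
qed

lemma row_space_eq_span_coordinate_rows:
  assumes B: "ext.independent B"
    and x: "range (($) x) \<subseteq> ext.span B"
  shows "row_space emb x = vec.span (coordinate_row emb B x ` B)"
proof (rule vec.span_subspace[symmetric])
  show "coordinate_row emb B x ` B \<subseteq> row_space emb x"
  proof
    fix u assume "u \<in> coordinate_row emb B x ` B"
    then obtain b where u: "u = coordinate_row emb B x b" by blast
    define E where "E = ext.extend_basis B"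
    have E: "B \<subseteq> E" "ext.independent E" "ext.span E = UNIV"
      unfolding E_def using B
      by (simp_all add: ext.extend_basis_superset ext.independent_extend_basis ext.span_extend_basis)
    have "ext.representation E (x $ j) = ext.representation B (x $ j)" for j
      using x E by (intro ext.representation_extend) auto
    thus "u \<in> row_space emb x"
      using functional_in_row_space[OF ext.linear_representation[OF E(2,3), of b], where x = x]
      by (simp add: u coordinate_row_def)
  qed
  show "row_space emb x \<subseteq> vec.span (coordinate_row emb B x ` B)"
  proof
    fix u assume "u \<in> row_space emb x"
    then obtain \<phi> where u: "u = (\<chi> j. \<phi> (x $ j))"
      and \<phi>: "Vector_Spaces.linear (ext_scale emb) (*) \<phi>"
      by (auto simp: row_space_def)
    interpret \<phi>: Vector_Spaces.linear "ext_scale emb" "(*)" \<phi> by (rule \<phi>)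
    have "\<phi> (x $ j) = (\<Sum>b\<in>B. ext.representation B (x $ j) b * \<phi> b)" for j
    proof -
      have "x $ j = (\<Sum>b\<in>B. ext_scale emb (ext.representation B (x $ j) b) b)"
        using B x by (intro ext.sum_representation_eq[symmetric]) auto
      thus ?thesis by (metis (no_types, lifting) \<phi>.scale \<phi>.sum sum.cong)
    qed
    hence "u = (\<Sum>b\<in>B. \<phi> b *s coordinate_row emb B x b)"
      by (simp add: u vec_eq_iff coordinate_row_def mult.commute)
    also have "\<dots> \<in> vec.span (coordinate_row emb B x ` B)"
      by (intro vec.span_sum vec.span_scale vec.span_base) auto
    finally show "u \<in> vec.span (coordinate_row emb B x ` B)" .
  qed
qed (rule row_space_subspace)

lemma independent_coordinate_rows:
  assumes B: "ext.independent B" and "B \<subseteq> range (($) x)"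
  shows "inj_on (coordinate_row emb B x) B" "vec.independent (coordinate_row emb B x ` B)"
proof -
  define w where "w = coordinate_row emb B x"
  define idx where "idx = inv_into UNIV (($) x)"
  have w_idx: "w b $ idx b' = (if b = b' then 1 else 0)" if "b \<in> B" "b' \<in> B" for b b'
  proof -
    have "x $ idx b' = b'"
      unfolding idx_def by (rule f_inv_into_f) (use assms(2) that(2) in blast)
    thus ?thesis using ext.representation_basis[OF B that(2)] by (simp add: w_def coordinate_row_def)
  qed
  show inj_w: "inj_on w B"
    by (rule inj_onI) (metis w_idx zero_neq_one)
  show "vec.independent (w ` B)"
  proof (rule vec.independent_if_scalars_zero)
    fix f u assume sum0: "(\<Sum>v\<in>w ` B. f v *s v) = 0" and "u \<in> w ` B"
    then obtain b' where "b' \<in> B" "u = w b'" by blast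
    have "0 = (\<Sum>b\<in>B. f (w b) *s w b) $ idx b'"
      using sum0 by (simp add: sum.reindex[OF inj_w])
    also have "\<dots> = f u"
      using \<open>b' \<in> B\<close> \<open>u = w b'\<close>
      by (simp add: sum_component w_idx if_distrib cong: if_cong)
    finally show "f u = 0" ..
  qed simp
qed

lemma dim_row_space: "vec.dim (row_space emb (x :: 'a ^ 'n)) = rank_weight emb x"
proof -
  obtain B where B: "B \<subseteq> range (($) x)" "ext.independent B" "range (($) x) \<subseteq> ext.span B"
      "card B = rank_weight emb x"
    unfolding rank_weight_def using ext.basis_exists by blast
  show ?thesis
    using independent_coordinate_rows[OF B(2,1)] card_image[of "coordinate_row emb B x" B] B(4)
    by (simp add: row_space_eq_span_coordinate_rows[OF B(2,3)] vec.dim_span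
        vec.dim_eq_card_independent)
qed

lemma dim_row_space_Int_le:
  fixes x y r :: "'a ^ 'n"
  assumes "lin_indep_over emb \<alpha>" and "k \<le> CARD('n)"
    and "x \<in> gabidulin CARD('f) k \<alpha>" "y \<in> gabidulin CARD('f) k \<alpha>" "x \<noteq> y"
  shows "vec.dim (row_space emb (r - x) \<inter> row_space emb (r - y)) + (CARD('n) - k + 1)
           \<le> rank_weight emb (r - x) + rank_weight emb (r - y)"
proof -
  let ?Rx = "row_space emb (r - x)" and ?Ry = "row_space emb (r - y)"
  have "CARD('n) - k + 1 \<le> rank_weight emb (x - y)"
    using assms by (intro gabidulin_rank_weight_ge gabidulin_diff) auto
  also have "\<dots> = vec.dim (row_space emb ((r - y) - (r - x)))"
    by (simp add: dim_row_space)
  also have "\<dots> \<le> vec.dim {a + b | a b. a \<in> ?Ry \<and> b \<in> ?Rx}"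
    by (intro vec.dim_subset row_space_diff_subset)
  finally show ?thesis
    using vec.dim_sums_Int[OF row_space_subspace row_space_subspace, of "r - y" "r - x"]
    by (simp add: dim_row_space Int_commute)
qed

end

theorem lemma1:
  fixes emb :: "'f::{finite,field} \<Rightarrow> 'a::{finite,field}"
    and \<alpha> r :: "'a ^ 'n"
    and c :: "nat \<Rightarrow> 'a ^ 'n"
    and m k \<tau> l i j :: nat
  assumes emb: "field_embedding emb"
    and card_big: "CARD('a) = CARD('f) ^ m"
    and n_le_m: "CARD('n) \<le> m"
    and k_pos: "0 < k" and k_le_n: "k \<le> CARD('n)"
    and alpha: "lin_indep_over emb \<alpha>"
    and tau: "\<tau> < CARD('n) - k + 1"
    and c_code: "\<forall>s\<in>{1..l}. c s \<in> gabidulin CARD('f) k \<alpha>"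
    and c_dist: "inj_on c {1..l}"
    and c_close: "\<forall>s\<in>{1..l}. rank_weight emb (r - c s) \<le> \<tau>"
    and ij: "i \<in> {1..l}" "j \<in> {1..l}" "i \<noteq> j"
    and ti: "(CARD('n) - k + 1 - 1) div 2 < rank_weight emb (r - c i)"
    and tj: "(CARD('n) - k + 1 - 1) div 2 < rank_weight emb (r - c j)"
  shows "\<not> (\<exists>U. vec.subspace U \<and> U \<subseteq> row_space emb (r - c i) \<inter> row_space emb (r - c j) \<and>
              vec.dim U \<ge> rank_weight emb (r - c i) + rank_weight emb (r - c j)
                           - (CARD('n) - k + 1) + 1)"
proof
  assume "\<exists>U. vec.subspace U \<and> U \<subseteq> row_space emb (r - c i) \<inter> row_space emb (r - c j) \<and>
              vec.dim U \<ge> rank_weight emb (r - c i) + rank_weight emb (r - c j)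
                           - (CARD('n) - k + 1) + 1"
  then obtain U where U: "U \<subseteq> row_space emb (r - c i) \<inter> row_space emb (r - c j)"
    "vec.dim U \<ge> rank_weight emb (r - c i) + rank_weight emb (r - c j) - (CARD('n) - k + 1) + 1"
    by blast
  have "vec.dim U \<le> vec.dim (row_space emb (r - c i) \<inter> row_space emb (r - c j))"
    using U(1) by (rule vec.dim_subset)
  moreover have "c i \<noteq> c j"
    using c_dist ij by (auto dest: inj_onD)
  hence "vec.dim (row_space emb (r - c i) \<inter> row_space emb (r - c j)) + (CARD('n) - k + 1)
           \<le> rank_weight emb (r - c i) + rank_weight emb (r - c j)"
    using c_code ij by (intro dim_row_space_Int_le[OF emb alpha k_le_n]) auto
  ultimately show False
    using U(2) ti tj by linarith
qed

end
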